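(* Let $d\ge2$ be an integer and $c>0$ real. For each integer $N>c^2$ define, for $A\subseteq\{1,\dots,N\}$, $$(\sigma^{(N)}_A)^2=\Big(\frac{c}{\sqrt N}\Big)^{|A|}\Big(1-\frac{c}{\sqrt N}\Big)^{N-|A|}$$ (with $\sigma^{(N)}_A\ge0$). Then: (1) $\sum_{A\subseteq\{1,\dots,N\}}(\sigma^{(N)}_A)^2=1$ for each such $N$; (2) $\lim_{N\to\infty}\sum_{A_1,A_2,A_3\subseteq\{1,\dots,N\},\ A_1\cap A_2\cap A_3\neq\emptyset}(\sigma^{(N)}_{A_1})^2(\sigma^{(N)}_{A_2})^2(\sigma^{(N)}_{A_3})^2=0$; (3) with $p_k=\frac{1}{k!}c^{2k}e^{-c^2}$ ($k\ge0$), for every $k\in\mathbb N$ and all nonnegative integers $n_{ij}$, $1\le i<j\le k$, $$\lim_{N\to\infty}\sum_{\substack{A_1,\dots,A_k\subseteq\{1,\dots,N\}\\ |A_i\cap A_j|=n_{ij}\ \forall\,1\le i<j\le k}}(\sigma^{(N)}_{A_1})^2\cdots(\sigma^{(N)}_{A_k})^2=\prod_{1\le i<j\le k}p_{n_{ij}};$$ (4) for each $n\in\mathbb N$, $\lim_{N\to\infty}\sum_{A_1,\dots,A_n\subseteq\{1,\dots,N\}}(\sigma^{(N)}_{A_1})^2\cdots(\sigma^{(N)}_{A_n})^2\, d^{-2|A_1\setminus(A_2\cup\cdots\cup A_n)|}=0$. Moreover $q:=\sum_{k\ge0}p_kd^{-2k}=e^{-(1-\frac1{d^2})c^2}$. 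*)

theory Defs
  imports Complex_Main "HOL-Library.FuncSet"
begin

definition sigma_sq :: "real \<Rightarrow> nat \<Rightarrow> nat set \<Rightarrow> real" where
  "sigma_sq c N A = (c / sqrt (real N)) ^ card A * (1 - c / sqrt (real N)) ^ (N - card A)"

definition pois :: "real \<Rightarrow> nat \<Rightarrow> real" where
  "pois c k = c ^ (2 * k) * exp (- (c ^ 2)) / fact k"

end

theory Submission
  imports Defs "HOL-Real_Asymp.Real_Asymp"
begin

(* With p = c / sqrt N, sigma_sq c N A is the probability that a random subset of {1..N}, containing
   each point independently with probability p, equals A.  Transposing a tuple (A_1, ..., A_k) into
   the map sending a point e to its column {i. e \<in> A_i} turns the product of the weights into a
   product of independent weights of the columns.  Then (1) is the binomial theorem; (2) is a union
   bound over a common point, of total weight N p^3 \<rightarrow> 0; in (4) a point contributes the factor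
   d^-2 exactly when its column is {1}, so that the sum is (1 - p (1 - p)^(n-1) (1 - d^-2))^N, which
   decays like exp (- const * c * sqrt N).  In (3), columns with three or more elements have total
   weight O(N p^3); for the other configurations |A_i \<inter> A_j| = n_ij says that exactly n_ij columns
   equal {i, j}, so the sum is a multinomial probability with cell weights about c^2 / N, and the
   Poisson limit of the multinomial distribution gives the product of the p_(n_ij).  The formula
   for q is the exponential series. *)

section \<open>Binomial weights of subsets\<close>

definition subset_weight :: "real \<Rightarrow> nat \<Rightarrow> 'a set \<Rightarrow> real" where
  "subset_weight p n S = p ^ card S * (1 - p) ^ (n - card S)"

lemma subset_weight_nonneg: "0 \<le> p \<Longrightarrow> p \<le> 1 \<Longrightarrow> 0 \<le> subset_weight p n S"
  by (simp add: subset_weight_def)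

lemma subset_weight_eq_prod:
  assumes "finite D" "S \<subseteq> D"
  shows "subset_weight p (card D) S = (\<Prod>e\<in>D. if e \<in> S then p else 1 - p)"
proof -
  have "(\<Prod>e\<in>D. if e \<in> S then p else 1 - p) = (\<Prod>e\<in>D \<inter> S. p) * (\<Prod>e\<in>D - S. 1 - p)"
    by (simp add: prod.If_cases assms Diff_eq)
  also have "\<dots> = subset_weight p (card D) S"
    using assms by (simp add: subset_weight_def Int_absorb1 card_Diff_subset finite_subset)
  finally show ?thesis by simp
qed

lemma sum_subset_weight_Pow:
  assumes "finite D"
  shows "(\<Sum>S\<in>Pow D. subset_weight p (card D) S) = 1"
proof -
  have "(\<Sum>S\<in>Pow D. subset_weight p (card D) S) = (\<Sum>S\<in>Pow D. (\<Prod>e\<in>S. p) * (\<Prod>e\<in>D - S. 1 - p))"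
    using assms by (intro sum.cong refl) (auto simp: subset_weight_def card_Diff_subset finite_subset)
  also have "\<dots> = (\<Prod>e\<in>D. p + (1 - p))"
    by (rule prod_add[OF assms, symmetric])
  finally show ?thesis by simp
qed

lemma sum_subset_weight_mem:
  assumes "finite D" "x \<in> D"
  shows "(\<Sum>S\<in>{S\<in>Pow D. x \<in> S}. subset_weight p (card D) S) = p"
proof -
  have "{S\<in>Pow D. x \<in> S} = insert x ` Pow (D - {x})"
  proof (intro equalityI subsetI)
    fix S assume "S \<in> {S\<in>Pow D. x \<in> S}"
    then show "S \<in> insert x ` Pow (D - {x})"
      by (intro image_eqI[of _ _ "S - {x}"]) auto
  qed (use assms(2) in auto)
  moreover have "inj_on (insert x) (Pow (D - {x}))"
    unfolding inj_on_def by blast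
  moreover have "subset_weight p (card D) (insert x T) = p * subset_weight p (card (D - {x})) T"
    if "T \<subseteq> D - {x}" for T
  proof -
    have "finite T" "x \<notin> T"
      using that assms finite_subset by auto
    then show ?thesis
      using assms by (simp add: subset_weight_def card_Diff_singleton)
  qed
  ultimately have "(\<Sum>S\<in>{S\<in>Pow D. x \<in> S}. subset_weight p (card D) S)
      = p * (\<Sum>T\<in>Pow (D - {x}). subset_weight p (card (D - {x})) T)"
    by (simp add: sum.reindex sum_distrib_left)
  also have "\<dots> = p"
    using sum_subset_weight_Pow[of "D - {x}" p] assms by simp
  finally show ?thesis .
qed

lemma sum_subset_weight_card_gt_le:
  assumes "finite D" "0 \<le> p" "p \<le> 1"
  shows "(\<Sum>S\<in>{S\<in>Pow D. m < card S}. subset_weight p (card D) S) \<le> 2 ^ card D * p ^ Suc m"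
proof -
  have "(\<Sum>S\<in>{S\<in>Pow D. m < card S}. subset_weight p (card D) S) \<le> (\<Sum>S\<in>{S\<in>Pow D. m < card S}. p ^ Suc m)"
  proof (intro sum_mono)
    fix S assume "S \<in> {S\<in>Pow D. m < card S}"
    then have "p ^ card S \<le> p ^ Suc m"
      using assms by (intro power_decreasing) auto
    moreover have "(1 - p) ^ (card D - card S) \<le> 1"
      using assms by (intro power_le_one) auto
    ultimately have "subset_weight p (card D) S \<le> p ^ Suc m * 1"
      unfolding subset_weight_def using assms by (intro mult_mono) auto
    then show "subset_weight p (card D) S \<le> p ^ Suc m"
      by simp
  qed
  also have "\<dots> \<le> 2 ^ card D * p ^ Suc m"
  proof -
    have "card {S\<in>Pow D. m < card S} \<le> card (Pow D)"
      using assms by (intro card_mono) auto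
    then have "real (card {S\<in>Pow D. m < card S}) \<le> 2 ^ card D"
      using assms by (simp add: card_Pow)
    then show ?thesis
      using assms by (simp add: mult_right_mono)
  qed
  finally show ?thesis .
qed

section \<open>Transposed tuples of subsets\<close>

definition transpose_sets :: "'a set \<Rightarrow> 'b set \<Rightarrow> ('b \<Rightarrow> 'a set) \<Rightarrow> 'a \<Rightarrow> 'b set" where
  "transpose_sets I D f = (\<lambda>i\<in>I. {e\<in>D. i \<in> f e})"

lemma bij_betw_transpose_sets:
  "bij_betw (transpose_sets I D) (PiE D (\<lambda>_. Pow I)) (PiE I (\<lambda>_. Pow D))"
  by (rule bij_betw_byWitness[where f' = "transpose_sets D I"])
    (auto simp: transpose_sets_def PiE_def Pi_def extensional_def fun_eq_iff)

lemma prod_subset_weight_transpose_sets: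
  assumes "finite I" "finite D" "f \<in> PiE D (\<lambda>_. Pow I)"
  shows "(\<Prod>i\<in>I. subset_weight p (card D) (transpose_sets I D f i))
       = (\<Prod>e\<in>D. subset_weight p (card I) (f e))"
proof -
  have "(\<Prod>i\<in>I. subset_weight p (card D) (transpose_sets I D f i))
      = (\<Prod>i\<in>I. \<Prod>e\<in>D. if i \<in> f e then p else 1 - p)"
    using assms by (intro prod.cong refl)
      (auto simp: subset_weight_eq_prod transpose_sets_def intro!: prod.cong)
  also have "\<dots> = (\<Prod>e\<in>D. \<Prod>i\<in>I. if i \<in> f e then p else 1 - p)"
    by (rule prod.swap)
  also have "\<dots> = (\<Prod>e\<in>D. subset_weight p (card I) (f e))"
    using assms by (intro prod.cong refl) (auto simp: subset_weight_eq_prod PiE_iff)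
  finally show ?thesis .
qed

lemma sum_prod_subset_weight_transpose_sets:
  assumes "finite I" "finite D"
  shows "(\<Sum>A\<in>PiE I (\<lambda>_. Pow D). (\<Prod>i\<in>I. subset_weight p (card D) (A i)) * g A)
       = (\<Sum>f\<in>PiE D (\<lambda>_. Pow I). (\<Prod>e\<in>D. subset_weight p (card I) (f e)) * g (transpose_sets I D f))"
proof -
  have "(\<Sum>A\<in>PiE I (\<lambda>_. Pow D). (\<Prod>i\<in>I. subset_weight p (card D) (A i)) * g A)
      = (\<Sum>f\<in>PiE D (\<lambda>_. Pow I).
           (\<Prod>i\<in>I. subset_weight p (card D) (transpose_sets I D f i)) * g (transpose_sets I D f))"
    by (rule sum.reindex_bij_betw[OF bij_betw_transpose_sets, symmetric])
  also have "\<dots> = (\<Sum>f\<in>PiE D (\<lambda>_. Pow I). (\<Prod>e\<in>D. subset_weight p (card I) (f e)) * g (transpose_sets I D f))"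
    using assms by (intro sum.cong refl) (simp add: prod_subset_weight_transpose_sets)
  finally show ?thesis .
qed

section \<open>Product weights on function spaces\<close>

lemma sum_prod_PiE_Diff_le:
  fixes w :: "'a \<Rightarrow> real"
  assumes "finite D" "finite \<Omega>" "B \<subseteq> \<Omega>"
    and "\<And>x. x \<in> \<Omega> \<Longrightarrow> 0 \<le> w x" and "(\<Sum>x\<in>\<Omega>. w x) = 1"
  shows "(\<Sum>f\<in>PiE D (\<lambda>_. \<Omega>) - PiE D (\<lambda>_. B). \<Prod>e\<in>D. w (f e)) \<le> card D * (\<Sum>x\<in>\<Omega> - B. w x)"
proof -
  define y where "y = (\<Sum>x\<in>\<Omega> - B. w x)"
  have B: "(\<Sum>x\<in>B. w x) = 1 - y"
    using sum.subset_diff[OF assms(3,2), of w] assms(5) by (simp add: y_def)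
  have "0 \<le> (\<Sum>x\<in>B. w x)"
    using assms(3,4) by (intro sum_nonneg) auto
  then have "-1 \<le> - y"
    using B by simp
  have sub: "PiE D (\<lambda>_. B) \<subseteq> PiE D (\<lambda>_. \<Omega>)"
    using assms(3) by (auto simp: PiE_def Pi_def)
  have "(\<Sum>f\<in>PiE D (\<lambda>_. \<Omega>) - PiE D (\<lambda>_. B). \<Prod>e\<in>D. w (f e))
      = (\<Sum>f\<in>PiE D (\<lambda>_. \<Omega>). \<Prod>e\<in>D. w (f e)) - (\<Sum>f\<in>PiE D (\<lambda>_. B). \<Prod>e\<in>D. w (f e))"
    using assms by (intro sum_diff finite_PiE sub) auto
  also have "\<dots> = 1 - (1 - y) ^ card D"
    using prod_sum_PiE[of D "\<lambda>_. \<Omega>" "\<lambda>_. w"] prod_sum_PiE[of D "\<lambda>_. B" "\<lambda>_. w"]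
      assms finite_subset[OF assms(3,2)] B
    by simp
  also have "\<dots> \<le> card D * y"
    using Bernoulli_inequality[OF \<open>-1 \<le> - y\<close>, of "card D"] by simp
  finally show ?thesis
    by (simp add: y_def)
qed

text \<open>The number of ways to place disjoint blocks of the sizes \<open>m j\<close> (\<open>j \<in> J\<close>) into an
  \<open>N\<close>-element set; it is \<open>0\<close> when the blocks do not fit.\<close>
definition multinomial_coeff :: "nat \<Rightarrow> 'a set \<Rightarrow> ('a \<Rightarrow> nat) \<Rightarrow> real" where
  "multinomial_coeff N J m =
     (if sum m J \<le> N then fact N / (fact (N - sum m J) * (\<Prod>j\<in>J. fact (m j))) else 0)"

lemma multinomial_coeff_insert:
  assumes "finite J" "j \<notin> J"
  shows "multinomial_coeff N (insert j J) m = real (N choose m j) * multinomial_coeff (N - m j) J m"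
proof (cases "m j + sum m J \<le> N")
  case True
  have "real (N choose m j) = fact N / (fact (m j) * fact (N - m j))"
    using True by (intro binomial_fact) simp
  moreover have "N - m j - sum m J = N - (m j + sum m J)"
    by simp
  ultimately show ?thesis
    using True assms by (simp add: multinomial_coeff_def field_simps)
next
  case False
  then show ?thesis
    using assms by (auto simp: multinomial_coeff_def not_le binomial_eq_0)
qed

lemma sum_PiE_fibre:
  fixes w :: "'a \<Rightarrow> real"
  assumes "j \<notin> X" "J \<subseteq> X" "T \<subseteq> D" "finite D"
  shows "(\<Sum>f\<in>{f\<in>PiE D (\<lambda>_. insert j X). {e\<in>D. f e = j} = T \<and> (\<forall>i\<in>J. card {e\<in>D. f e = i} = m i)}.
            \<Prod>e\<in>D. w (f e))
       = w j ^ card T * (\<Sum>g\<in>{g\<in>PiE (D - T) (\<lambda>_. X). \<forall>i\<in>J. card {e\<in>D - T. g e = i} = m i}.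
            \<Prod>e\<in>D - T. w (g e))"
proof -
  define ext where "ext g = (\<lambda>e. if e \<in> T then j else g e)" for g :: "'b \<Rightarrow> 'a"
  have count_ext: "{e\<in>D. ext g e = i} = {e\<in>D - T. g e = i}" if "i \<in> J" for g i
    using that assms(1,2) by (auto simp: ext_def)
  have prod_ext: "(\<Prod>e\<in>D. w (ext g e)) = w j ^ card T * (\<Prod>e\<in>D - T. w (g e))" for g
    using prod.subset_diff[OF assms(3,4), of "\<lambda>e. w (ext g e)"] assms(3)
    by (simp add: ext_def)
  have "(\<Sum>f\<in>{f\<in>PiE D (\<lambda>_. insert j X). {e\<in>D. f e = j} = T \<and> (\<forall>i\<in>J. card {e\<in>D. f e = i} = m i)}.
            \<Prod>e\<in>D. w (f e))
      = (\<Sum>g\<in>{g\<in>PiE (D - T) (\<lambda>_. X). \<forall>i\<in>J. card {e\<in>D - T. g e = i} = m i}. \<Prod>e\<in>D. w (ext g e))"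
  proof (rule sum.reindex_bij_witness[of _ ext "\<lambda>f. restrict f (D - T)"])
    fix f assume "f \<in> {f\<in>PiE D (\<lambda>_. insert j X). {e\<in>D. f e = j} = T \<and> (\<forall>i\<in>J. card {e\<in>D. f e = i} = m i)}"
    then have f: "f \<in> PiE D (\<lambda>_. insert j X)" "{e\<in>D. f e = j} = T" "\<forall>i\<in>J. card {e\<in>D. f e = i} = m i"
      by auto
    show ext_restrict: "ext (restrict f (D - T)) = f"
      using f(1,2) by (auto simp: ext_def fun_eq_iff PiE_def extensional_def)
    show "(\<Prod>e\<in>D. w (ext (restrict f (D - T)) e)) = (\<Prod>e\<in>D. w (f e))"
      by (simp add: ext_restrict)
    show "restrict f (D - T) \<in> {g\<in>PiE (D - T) (\<lambda>_. X). \<forall>i\<in>J. card {e\<in>D - T. g e = i} = m i}"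
      using f count_ext[of _ "restrict f (D - T)"] by (auto simp: ext_restrict PiE_def Pi_def)
  next
    fix g assume "g \<in> {g\<in>PiE (D - T) (\<lambda>_. X). \<forall>i\<in>J. card {e\<in>D - T. g e = i} = m i}"
    then have g: "g \<in> PiE (D - T) (\<lambda>_. X)" "\<forall>i\<in>J. card {e\<in>D - T. g e = i} = m i"
      by auto
    show "restrict (ext g) (D - T) = g"
      using g(1) by (auto simp: ext_def fun_eq_iff PiE_def extensional_def)
    show "ext g \<in> {f\<in>PiE D (\<lambda>_. insert j X). {e\<in>D. f e = j} = T \<and> (\<forall>i\<in>J. card {e\<in>D. f e = i} = m i)}"
      using g assms(1,3) count_ext[of _ g] by (auto simp: ext_def PiE_def Pi_def extensional_def)
  qed
  then show ?thesis
    by (simp add: prod_ext sum_distrib_left)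
qed

lemma sum_PiE_card_fibres:
  fixes w :: "'a \<Rightarrow> real"
  assumes "finite J" "finite X" "J \<inter> X = {}" "finite D"
  shows "(\<Sum>f\<in>{f\<in>PiE D (\<lambda>_. J \<union> X). \<forall>j\<in>J. card {e\<in>D. f e = j} = m j}. \<Prod>e\<in>D. w (f e))
       = multinomial_coeff (card D) J m * (\<Prod>j\<in>J. w j ^ m j) * (\<Sum>x\<in>X. w x) ^ (card D - sum m J)"
  using assms
proof (induction J arbitrary: D rule: finite_induct)
  case empty
  then show ?case
    using prod_sum_PiE[of D "\<lambda>_. X" "\<lambda>_. w"] by (simp add: multinomial_coeff_def)
next
  case (insert j J)
  define TT where "TT = {T. T \<subseteq> D \<and> card T = m j}"
  define F where "F = {f\<in>PiE D (\<lambda>_. insert j (J \<union> X)). \<forall>i\<in>insert j J. card {e\<in>D. f e = i} = m i}"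
  define rest where "rest = multinomial_coeff (card D - m j) J m * (\<Prod>i\<in>J. w i ^ m i)
    * (\<Sum>x\<in>X. w x) ^ (card D - m j - sum m J)"
  have fibre: "(\<Sum>f\<in>{f\<in>F. {e\<in>D. f e = j} = T}. \<Prod>e\<in>D. w (f e)) = w j ^ m j * rest" if "T \<in> TT" for T
  proof -
    have T: "T \<subseteq> D" "card T = m j" "finite T"
      using that insert.prems(3) finite_subset by (auto simp: TT_def)
    have "{f\<in>F. {e\<in>D. f e = j} = T}
        = {f\<in>PiE D (\<lambda>_. insert j (J \<union> X)). {e\<in>D. f e = j} = T \<and> (\<forall>i\<in>J. card {e\<in>D. f e = i} = m i)}"
      using T by (auto simp: F_def)
    then have "(\<Sum>f\<in>{f\<in>F. {e\<in>D. f e = j} = T}. \<Prod>e\<in>D. w (f e))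
        = w j ^ m j * (\<Sum>g\<in>{g\<in>PiE (D - T) (\<lambda>_. J \<union> X). \<forall>i\<in>J. card {e\<in>D - T. g e = i} = m i}.
            \<Prod>e\<in>D - T. w (g e))"
      using insert.hyps insert.prems T by (simp add: sum_PiE_fibre)
    also have "\<dots> = w j ^ m j * rest"
      using insert.IH[of "D - T"] insert.prems T by (simp add: rest_def card_Diff_subset)
    finally show ?thesis .
  qed
  have "finite F"
    using insert.prems insert.hyps
    by (intro finite_subset[OF _ finite_PiE[of D "\<lambda>_. insert j (J \<union> X)"]]) (auto simp: F_def)
  moreover have "finite TT"
    using insert.prems by (simp add: TT_def)
  moreover have "(\<lambda>f. {e\<in>D. f e = j}) ` F \<subseteq> TT"
    by (auto simp: F_def TT_def)
  ultimately have "(\<Sum>f\<in>F. \<Prod>e\<in>D. w (f e)) = (\<Sum>T\<in>TT. w j ^ m j * rest)"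
    by (simp add: sum.group[symmetric] fibre cong: sum.cong)
  also have "\<dots> = real (card D choose m j) * w j ^ m j * rest"
    using n_subsets[OF insert.prems(3), of "m j"] by (simp add: TT_def)
  also have "\<dots> = multinomial_coeff (card D) (insert j J) m * (\<Prod>i\<in>insert j J. w i ^ m i)
      * (\<Sum>x\<in>X. w x) ^ (card D - sum m (insert j J))"
    using insert.hyps by (simp add: rest_def multinomial_coeff_insert diff_diff_add)
  finally show ?case
    by (simp add: F_def)
qed

lemma abs_mult_ln_one_plus_div_minus_le:
  fixes z :: real
  assumes "n > 0" "\<bar>z / n\<bar> \<le> 1/2"
  shows "\<bar>n * ln (1 + z / n) - z\<bar> \<le> 2 * z\<^sup>2 / n"
proof -
  have "n * \<bar>ln (1 + z / n) - z / n\<bar> \<le> n * (2 * (z / n)\<^sup>2)"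
    using assms abs_ln_one_plus_x_minus_x_bound[of "z / n"] by (intro mult_left_mono) auto
  moreover have "n * ln (1 + z / n) - z = n * (ln (1 + z / n) - z / n)"
    using assms(1) by (simp add: right_diff_distrib)
  ultimately show ?thesis
    using assms(1) by (simp add: abs_mult power2_eq_square)
qed

lemma tendsto_one_plus_div_power:
  fixes z :: "nat \<Rightarrow> real"
  assumes "z \<longlonglongrightarrow> x"
  shows "(\<lambda>n. (1 + z n / real n) ^ n) \<longlonglongrightarrow> exp x"
proof -
  have u: "(\<lambda>n. z n / real n) \<longlonglongrightarrow> 0"
    using tendsto_mult[OF assms lim_inverse_n'] by (simp add: divide_inverse)
  have small: "\<forall>\<^sub>F n in sequentially. \<bar>z n / real n\<bar> < 1/2"
    by (rule order_tendstoD(2)[OF tendsto_rabs_zero[OF u]]) simp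
  have err: "(\<lambda>n. 2 * (z n)\<^sup>2 / real n) \<longlonglongrightarrow> 0"
    using tendsto_mult[OF tendsto_const[of 2] tendsto_mult[OF assms u]] by (simp add: power2_eq_square)
  have "(\<lambda>n. real n * ln (1 + z n / real n) - z n) \<longlonglongrightarrow> 0"
  proof (rule tendsto_0_le[OF err, where K = 1])
    show "\<forall>\<^sub>F n in sequentially. norm (real n * ln (1 + z n / real n) - z n) \<le> norm (2 * (z n)\<^sup>2 / real n) * 1"
      using small eventually_gt_at_top[of 0]
      by eventually_elim (use abs_mult_ln_one_plus_div_minus_le in force)
  qed
  from tendsto_add[OF this assms] have "(\<lambda>n. exp (real n * ln (1 + z n / real n))) \<longlonglongrightarrow> exp x"
    by (intro tendsto_exp) simp
  moreover have "\<forall>\<^sub>F n in sequentially. exp (real n * ln (1 + z n / real n)) = (1 + z n / real n) ^ n"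
    using small
  proof eventually_elim
    case (elim n)
    then have "0 < 1 + z n / real n"
      using abs_less_iff[of "z n / real n" "1/2"] by linarith
    then show ?case
      by (simp add: exp_of_nat_mult)
  qed
  ultimately show ?thesis
    by (rule Lim_transform_eventually)
qed

lemma tendsto_power_diff_exp:
  fixes b :: "nat \<Rightarrow> real"
  assumes "(\<lambda>n. real n * (1 - b n)) \<longlonglongrightarrow> L"
  shows "(\<lambda>n. b n ^ (n - M)) \<longlonglongrightarrow> exp (- L)"
proof -
  have b_eq: "\<forall>\<^sub>F n in sequentially. 1 + - (real n * (1 - b n)) / real n = b n"
    using eventually_gt_at_top[of 0] by eventually_elim simp
  have "(\<lambda>n. (1 + - (real n * (1 - b n)) / real n) ^ n) \<longlonglongrightarrow> exp (- L)"
    by (intro tendsto_one_plus_div_power tendsto_minus assms)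
  moreover have "\<forall>\<^sub>F n in sequentially. (1 + - (real n * (1 - b n)) / real n) ^ n = b n ^ n"
    using b_eq by eventually_elim simp
  ultimately have bn: "(\<lambda>n. b n ^ n) \<longlonglongrightarrow> exp (- L)"
    by (rule Lim_transform_eventually)
  have "(\<lambda>n. 1 + - (real n * (1 - b n)) * inverse (real n)) \<longlonglongrightarrow> 1 + - L * 0"
    by (intro tendsto_intros assms lim_inverse_n)
  then have "(\<lambda>n. 1 + - (real n * (1 - b n)) / real n) \<longlonglongrightarrow> 1"
    by (simp add: divide_inverse)
  then have "b \<longlonglongrightarrow> 1"
    using b_eq by (rule Lim_transform_eventually)
  then have b_pos: "\<forall>\<^sub>F n in sequentially. b n > 0" and bM: "(\<lambda>n. b n ^ M) \<longlonglongrightarrow> 1"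
    using order_tendstoD(1)[of b 1 sequentially 0] tendsto_power[of b 1 sequentially M] by auto
  have "(\<lambda>n. b n ^ n / b n ^ M) \<longlonglongrightarrow> exp (- L) / 1"
    by (intro tendsto_divide bn bM) simp
  moreover have "\<forall>\<^sub>F n in sequentially. b n ^ n / b n ^ M = b n ^ (n - M)"
    using b_pos eventually_ge_at_top[of M] by eventually_elim (simp add: power_diff)
  ultimately show ?thesis
    by (simp add: Lim_transform_eventually)
qed

lemma tendsto_fact_div_fact_diff_power:
  "(\<lambda>N. fact N / (fact (N - M) * real N ^ M) :: real) \<longlonglongrightarrow> 1"
proof (induction M)
  case 0
  then show ?case by simp
next
  case (Suc M)
  have "(\<lambda>N. fact N / (fact (N - M) * real N ^ M) * ((real N - real M) / real N) :: real) \<longlonglongrightarrow> 1 * 1"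
    by (intro tendsto_mult Suc.IH) real_asymp
  moreover have "\<forall>\<^sub>F N in sequentially.
      fact N / (fact (N - M) * real N ^ M) * ((real N - real M) / real N) = fact N / (fact (N - Suc M) * real N ^ Suc M)"
    using eventually_gt_at_top[of M]
  proof eventually_elim
    case (elim N)
    then have fact_eq: "(fact (N - M) :: real) = (real N - real M) * fact (N - Suc M)"
      by (simp add: fact_reduce of_nat_diff)
    have "real N - real M \<noteq> 0" "real N \<noteq> 0"
      using elim by auto
    then show ?case
      unfolding fact_eq by (simp add: field_simps)
  qed
  ultimately show ?case
    by (simp add: Lim_transform_eventually)
qed

lemma tendsto_multinomial_Poisson:
  fixes a b :: "nat \<Rightarrow> real"
  assumes "(\<lambda>N. real N * a N) \<longlonglongrightarrow> t" and "(\<lambda>N. real N * (1 - b N)) \<longlonglongrightarrow> L"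
  shows "(\<lambda>N. multinomial_coeff N J m * a N ^ sum m J * b N ^ (N - sum m J))
    \<longlonglongrightarrow> t ^ sum m J / (\<Prod>j\<in>J. fact (m j)) * exp (- L)"
proof -
  define M where "M = sum m J"
  define PF where "PF = (\<Prod>j\<in>J. fact (m j) :: real)"
  have "PF > 0"
    by (simp add: PF_def prod_pos)
  have "(\<lambda>N. fact N / (fact (N - M) * real N ^ M) * (real N * a N) ^ M / PF * b N ^ (N - M))
      \<longlonglongrightarrow> 1 * t ^ M / PF * exp (- L)"
    using \<open>PF > 0\<close> by (intro tendsto_intros tendsto_fact_div_fact_diff_power tendsto_power_diff_exp assms) auto
  moreover have "\<forall>\<^sub>F N in sequentially.
      fact N / (fact (N - M) * real N ^ M) * (real N * a N) ^ M / PF * b N ^ (N - M)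
      = multinomial_coeff N J m * a N ^ M * b N ^ (N - M)"
    using eventually_ge_at_top[of M] eventually_gt_at_top[of 0]
    by eventually_elim (use \<open>PF > 0\<close> in \<open>simp add: multinomial_coeff_def M_def PF_def power_mult_distrib\<close>)
  ultimately show ?thesis
    by (simp add: Lim_transform_eventually M_def PF_def)
qed

lemma tendsto_one_minus_power_zero:
  fixes y :: "nat \<Rightarrow> real"
  assumes "\<forall>\<^sub>F N in sequentially. 0 \<le> y N \<and> y N \<le> 1"
    and "filterlim (\<lambda>N. real N * y N) at_top sequentially"
  shows "(\<lambda>N. (1 - y N) ^ N) \<longlonglongrightarrow> 0"
proof (rule tendsto_sandwich[OF _ _ tendsto_const])
  show "\<forall>\<^sub>F N in sequentially. 0 \<le> (1 - y N) ^ N"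
    using assms(1) by eventually_elim simp
  show "\<forall>\<^sub>F N in sequentially. (1 - y N) ^ N \<le> exp (- (real N * y N))"
    using assms(1)
  proof eventually_elim
    case (elim N)
    then have "(1 - y N) ^ N \<le> exp (- y N) ^ N"
      using exp_ge_add_one_self[of "- y N"] by (intro power_mono) auto
    then show ?case
      by (simp add: exp_of_nat_mult[symmetric])
  qed
  show "(\<lambda>N. exp (- (real N * y N))) \<longlonglongrightarrow> 0"
    using filterlim_compose[OF exp_at_bot assms(2)[unfolded filterlim_uminus_at_top]] by simp
qed

lemma sigma_sq_eq_subset_weight: "sigma_sq c N = subset_weight (c / sqrt (real N)) N"
  by (simp add: fun_eq_iff sigma_sq_def subset_weight_def)

lemma eventually_div_sqrt_le_1:
  assumes "0 \<le> c"
  shows "\<forall>\<^sub>F N in sequentially. 0 \<le> c / sqrt (real N) \<and> c / sqrt (real N) \<le> 1"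
proof -
  have "(\<lambda>N. c / sqrt (real N)) \<longlonglongrightarrow> 0"
    by real_asymp
  then have "\<forall>\<^sub>F N in sequentially. c / sqrt (real N) < 1"
    by (rule order_tendstoD) simp
  then show ?thesis
    by eventually_elim (use assms in simp)
qed

lemma filterlim_real_mult_div_sqrt:
  fixes c s :: real
  assumes "c > 0" "s > 0"
  shows "filterlim (\<lambda>N. real N * (c / sqrt (real N) * (1 - c / sqrt (real N)) ^ m * s)) at_top sequentially"
proof -
  have lim: "(\<lambda>N. (1 - c / sqrt (real N)) ^ m * s) \<longlonglongrightarrow> (1 - 0) ^ m * s"
    by (intro tendsto_intros) real_asymp
  have to_top: "filterlim (\<lambda>N. c * sqrt (real N)) at_top sequentially"
    using assms(1) by real_asymp
  have "filterlim (\<lambda>N. (1 - c / sqrt (real N)) ^ m * s * (c * sqrt (real N))) at_top sequentially"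
    by (rule filterlim_tendsto_pos_mult_at_top[OF lim _ to_top]) (use assms(2) in simp)
  moreover have "\<forall>\<^sub>F N in sequentially.
      (1 - c / sqrt (real N)) ^ m * s * (c * sqrt (real N)) = real N * (c / sqrt (real N) * (1 - c / sqrt (real N)) ^ m * s)"
    using eventually_gt_at_top[of 0]
  proof eventually_elim
    case (elim N)
    then have "real N * (c / sqrt (real N)) = c * sqrt (real N)"
      by (simp add: field_simps real_sqrt_mult[symmetric])
    then show ?case
      by (metis mult.assoc mult.commute)
  qed
  ultimately show ?thesis
    by (simp add: filterlim_cong)
qed

lemma sum_triple_product_eq_cube:
  fixes f :: "'a \<Rightarrow> 'b::comm_semiring_1"
  shows "(\<Sum>(a, b, c)\<in>P \<times> P \<times> P. f a * f b * f c) = sum f P ^ 3"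
proof -
  have "(\<Sum>(a, b, c)\<in>P \<times> P \<times> P. f a * f b * f c) = (\<Sum>a\<in>P. f a * (\<Sum>b\<in>P. f b * (\<Sum>c\<in>P. f c)))"
    by (simp add: sum.cartesian_product' sum_distrib_left mult.assoc)
  then show ?thesis
    by (simp add: sum_distrib_right[symmetric] power3_eq_cube mult.assoc)
qed

lemma sum_triple_intersecting_le:
  fixes p :: real
  assumes "finite D" "0 \<le> p" "p \<le> 1"
  defines "w \<equiv> subset_weight p (card D)"
  shows "(\<Sum>(A1, A2, A3)\<in>{(A1, A2, A3). A1 \<subseteq> D \<and> A2 \<subseteq> D \<and> A3 \<subseteq> D \<and> A1 \<inter> A2 \<inter> A3 \<noteq> {}}.
            w A1 * w A2 * w A3) \<le> card D * p ^ 3"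
proof -
  define P where "P = Pow D"
  define v where "v x A = (if x \<in> A then w A else 0)" for x A
  have w_nonneg: "0 \<le> w A" for A
    using assms by (simp add: w_def subset_weight_nonneg)
  txt \<open>Each triple is counted once for every point of its common intersection.\<close>
  have count: "w A1 * w A2 * w A3 \<le> (\<Sum>x\<in>D. v x A1 * v x A2 * v x A3)"
    if "A1 \<inter> A2 \<inter> A3 \<noteq> {}" "A1 \<subseteq> D" for A1 A2 A3
  proof -
    have "finite (A1 \<inter> A2 \<inter> A3)"
      using that assms(1) finite_subset by blast
    then have "1 \<le> real (card (A1 \<inter> A2 \<inter> A3))"
      using that by (simp add: Suc_le_eq card_gt_0_iff)
    from mult_right_mono[OF this, of "w A1 * w A2 * w A3"]
    have "w A1 * w A2 * w A3 \<le> real (card (A1 \<inter> A2 \<inter> A3)) * (w A1 * w A2 * w A3)"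
      using w_nonneg by simp
    also have "A1 \<inter> A2 \<inter> A3 = {x\<in>D. x \<in> A1 \<inter> A2 \<inter> A3}"
      using that(2) by blast
    also have "real (card {x\<in>D. x \<in> A1 \<inter> A2 \<inter> A3}) * (w A1 * w A2 * w A3)
        = (\<Sum>x\<in>D. if x \<in> A1 \<inter> A2 \<inter> A3 then w A1 * w A2 * w A3 else 0)"
      using sum.inter_filter[OF assms(1), of "\<lambda>_. w A1 * w A2 * w A3" "\<lambda>x. x \<in> A1 \<inter> A2 \<inter> A3"]
      by simp
    also have "\<dots> = (\<Sum>x\<in>D. v x A1 * v x A2 * v x A3)"
      by (intro sum.cong) (auto simp: v_def)
    finally show ?thesis .
  qed
  have "(\<Sum>(A1, A2, A3)\<in>{(A1, A2, A3). A1 \<subseteq> D \<and> A2 \<subseteq> D \<and> A3 \<subseteq> D \<and> A1 \<inter> A2 \<inter> A3 \<noteq> {}}.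
            w A1 * w A2 * w A3)
      \<le> (\<Sum>(A1, A2, A3)\<in>{(A1, A2, A3). A1 \<subseteq> D \<and> A2 \<subseteq> D \<and> A3 \<subseteq> D \<and> A1 \<inter> A2 \<inter> A3 \<noteq> {}}.
            \<Sum>x\<in>D. v x A1 * v x A2 * v x A3)"
    by (intro sum_mono) (auto intro: count)
  also have "\<dots> \<le> (\<Sum>(A1, A2, A3)\<in>P \<times> P \<times> P. \<Sum>x\<in>D. v x A1 * v x A2 * v x A3)"
    using assms(1) w_nonneg
    by (intro sum_mono2) (auto simp: P_def v_def intro!: sum_nonneg)
  also have "\<dots> = (\<Sum>x\<in>D. \<Sum>(A1, A2, A3)\<in>P \<times> P \<times> P. v x A1 * v x A2 * v x A3)"
    unfolding split_def by (rule sum.swap)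
  also have "\<dots> = (\<Sum>x\<in>D. (\<Sum>A\<in>P. v x A) ^ 3)"
    by (simp only: sum_triple_product_eq_cube)
  also have "\<dots> = (\<Sum>x\<in>D. p ^ 3)"
  proof (intro sum.cong refl)
    fix x assume "x \<in> D"
    have "(\<Sum>A\<in>P. v x A) = (\<Sum>A\<in>{A\<in>Pow D. x \<in> A}. w A)"
      unfolding P_def v_def using sum.inter_filter[of "Pow D" w "\<lambda>A. x \<in> A"] assms(1) by simp
    then show "(\<Sum>A\<in>P. v x A) ^ 3 = p ^ 3"
      using sum_subset_weight_mem[OF assms(1) \<open>x \<in> D\<close>, of p] by (simp add: w_def)
  qed
  finally show ?thesis
    by simp
qed

lemma tendsto_sum_triple_intersecting:
  assumes "c > 0"
  shows "(\<lambda>N. \<Sum>(A1, A2, A3)\<in>{(A1, A2, A3). A1 \<subseteq> {1..N} \<and> A2 \<subseteq> {1..N} \<and> A3 \<subseteq> {1..N}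
              \<and> A1 \<inter> A2 \<inter> A3 \<noteq> {}}. sigma_sq c N A1 * sigma_sq c N A2 * sigma_sq c N A3) \<longlonglongrightarrow> 0"
proof (rule tendsto_sandwich[OF _ _ tendsto_const])
  show "(\<lambda>N. real N * (c / sqrt (real N)) ^ 3) \<longlonglongrightarrow> 0"
    using assms by real_asymp
  show "\<forall>\<^sub>F N in sequentially. 0 \<le> (\<Sum>(A1, A2, A3)\<in>{(A1, A2, A3). A1 \<subseteq> {1..N} \<and> A2 \<subseteq> {1..N}
      \<and> A3 \<subseteq> {1..N} \<and> A1 \<inter> A2 \<inter> A3 \<noteq> {}}. sigma_sq c N A1 * sigma_sq c N A2 * sigma_sq c N A3)"
    using eventually_div_sqrt_le_1[OF less_imp_le[OF assms]]
    by eventually_elim (auto simp: sigma_sq_eq_subset_weight subset_weight_nonneg intro!: sum_nonneg)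
  show "\<forall>\<^sub>F N in sequentially. (\<Sum>(A1, A2, A3)\<in>{(A1, A2, A3). A1 \<subseteq> {1..N} \<and> A2 \<subseteq> {1..N}
      \<and> A3 \<subseteq> {1..N} \<and> A1 \<inter> A2 \<inter> A3 \<noteq> {}}. sigma_sq c N A1 * sigma_sq c N A2 * sigma_sq c N A3)
      \<le> real N * (c / sqrt (real N)) ^ 3"
    using eventually_div_sqrt_le_1[OF less_imp_le[OF assms]]
  proof eventually_elim
    case (elim N)
    then show ?case
      using sum_triple_intersecting_le[of "{1..N}" "c / sqrt (real N)"] by (simp add: sigma_sq_eq_subset_weight)
  qed
qed

lemma sum_exclusive_part_weight:
  assumes "finite I" "finite D" "i0 \<in> I"
  shows "(\<Sum>A\<in>PiE I (\<lambda>_. Pow D).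
            (\<Prod>i\<in>I. subset_weight p (card D) (A i)) * r ^ card (A i0 - (\<Union>i\<in>I - {i0}. A i)))
       = (1 - p * (1 - p) ^ (card I - 1) * (1 - r)) ^ card D"
proof -
  define h where "h S = subset_weight p (card I) S * (if S = {i0} then r else 1)" for S
  have exclusive_part: "transpose_sets I D f i0 - (\<Union>i\<in>I - {i0}. transpose_sets I D f i) = {e\<in>D. f e = {i0}}"
    if "f \<in> PiE D (\<lambda>_. Pow I)" for f
    using that assms(3) by (auto simp: transpose_sets_def PiE_def Pi_def)
  have "(\<Sum>A\<in>PiE I (\<lambda>_. Pow D).
            (\<Prod>i\<in>I. subset_weight p (card D) (A i)) * r ^ card (A i0 - (\<Union>i\<in>I - {i0}. A i)))
      = (\<Sum>f\<in>PiE D (\<lambda>_. Pow I). (\<Prod>e\<in>D. subset_weight p (card I) (f e)) * r ^ card {e\<in>D. f e = {i0}})"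
    unfolding sum_prod_subset_weight_transpose_sets[OF assms(1,2)]
    using assms by (intro sum.cong refl) (simp add: exclusive_part)
  also have "\<dots> = (\<Sum>f\<in>PiE D (\<lambda>_. Pow I). \<Prod>e\<in>D. h (f e))"
    using assms(2) by (intro sum.cong refl) (simp add: h_def prod.distrib prod.If_cases Int_def)
  also have "\<dots> = (\<Sum>S\<in>Pow I. h S) ^ card D"
    using prod_sum_PiE[of D "\<lambda>_. Pow I" "\<lambda>_. h"] assms by simp
  also have "(\<Sum>S\<in>Pow I. h S) = 1 + subset_weight p (card I) {i0} * (r - 1)"
  proof -
    have "h S = subset_weight p (card I) S + (if S = {i0} then subset_weight p (card I) {i0} * (r - 1) else 0)" for S
      by (simp add: h_def algebra_simps)
    then show ?thesis
      using assms by (simp add: sum.distrib sum_subset_weight_Pow)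
  qed
  finally show ?thesis
    by (simp add: subset_weight_def algebra_simps)
qed

lemma tendsto_sum_exclusive_part:
  fixes d n :: nat and c :: real
  assumes "d \<ge> 2" "c > 0" "n \<ge> 1"
  shows "(\<lambda>N. \<Sum>A\<in>PiE {1..n} (\<lambda>_. Pow {1..N}).
            (\<Prod>i\<in>{1..n}. sigma_sq c N (A i)) * inverse (real d ^ (2 * card (A 1 - (\<Union>i\<in>{2..n}. A i)))))
    \<longlonglongrightarrow> 0"
proof -
  define r where "r = inverse (real d ^ 2)"
  define y where "y N = c / sqrt (real N) * (1 - c / sqrt (real N)) ^ (n - 1) * (1 - r)" for N
  have "real d ^ 2 \<ge> 2 ^ 2"
    using assms(1) by (intro power_mono) auto
  then have r: "0 \<le> r" "r < 1"
    unfolding r_def by (simp_all add: inverse_less_1_iff)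
  have "{2..n} = {1..n} - {1}"
    by auto
  then have sum_eq: "(\<Sum>A\<in>PiE {1..n} (\<lambda>_. Pow {1..N}).
      (\<Prod>i\<in>{1..n}. sigma_sq c N (A i)) * inverse (real d ^ (2 * card (A 1 - (\<Union>i\<in>{2..n}. A i)))))
    = (1 - y N) ^ N" for N
    using sum_exclusive_part_weight[of "{1..n}" "{1..N}" 1 "c / sqrt (real N)" r] assms(3)
    by (simp add: sigma_sq_eq_subset_weight y_def r_def power_mult power_inverse)
  have "\<forall>\<^sub>F N in sequentially. 0 \<le> y N \<and> y N \<le> 1"
    using eventually_div_sqrt_le_1[OF less_imp_le[OF assms(2)]]
  proof eventually_elim
    case (elim N)
    then show ?case
      unfolding y_def using r
      by (intro conjI mult_nonneg_nonneg mult_le_one power_le_one zero_le_power) auto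
  qed
  moreover have "filterlim (\<lambda>N. real N * y N) at_top sequentially"
    unfolding y_def using assms(2) r by (intro filterlim_real_mult_div_sqrt) auto
  ultimately show ?thesis
    unfolding sum_eq by (rule tendsto_one_minus_power_zero)
qed

lemma sums_pois_inverse_power:
  "(\<lambda>k. pois c k * inverse (real d ^ (2 * k))) sums exp (- (1 - 1 / real d ^ 2) * c ^ 2)"
proof -
  have "(\<lambda>k. exp (- (c ^ 2)) * ((c ^ 2 / real d ^ 2) ^ k /\<^sub>R fact k)) sums (exp (- (c ^ 2)) * exp (c ^ 2 / real d ^ 2))"
    by (intro sums_mult exp_converges)
  moreover have "exp (- (c ^ 2)) * ((c ^ 2 / real d ^ 2) ^ k /\<^sub>R fact k) = pois c k * inverse (real d ^ (2 * k))" for k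
    by (simp add: pois_def power_mult power_divide divide_inverse mult_ac power_mult_distrib power_inverse
        flip: power_mult)
  moreover have "exp (- (c ^ 2)) * exp (c ^ 2 / real d ^ 2) = exp (- (1 - 1 / real d ^ 2) * c ^ 2)"
    by (simp add: algebra_simps flip: exp_add)
  ultimately show ?thesis
    by simp
qed

section \<open>Prescribed pairwise intersections\<close>

definition pair_sets :: "nat \<Rightarrow> nat set set" where
  "pair_sets k = {S\<in>Pow {1..k}. card S = 2}"

definition pair_value :: "(nat \<Rightarrow> nat \<Rightarrow> nat) \<Rightarrow> nat set \<Rightarrow> nat" where
  "pair_value n S = n (Min S) (Max S)"

definition has_pair_intersections :: "nat \<Rightarrow> (nat \<Rightarrow> nat \<Rightarrow> nat) \<Rightarrow> (nat \<Rightarrow> 'a set) \<Rightarrow> bool" where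
  "has_pair_intersections k n A \<longleftrightarrow> (\<forall>i j. 1 \<le> i \<and> i < j \<and> j \<le> k \<longrightarrow> card (A i \<inter> A j) = n i j)"

lemma pair_value_doubleton: "i < j \<Longrightarrow> pair_value n {i, j} = n i j"
  by (simp add: pair_value_def)

lemma bij_betw_pair_sets:
  "bij_betw (\<lambda>(i, j). {i, j}) {(i, j). 1 \<le> i \<and> i < j \<and> j \<le> k} (pair_sets k)"
proof (rule bij_betw_imageI)
  show "inj_on (\<lambda>(i, j). {i, j}) {(i, j). 1 \<le> i \<and> i < j \<and> j \<le> k}"
    by (auto simp: inj_on_def doubleton_eq_iff)
  show "(\<lambda>(i, j). {i, j}) ` {(i, j). 1 \<le> i \<and> i < j \<and> j \<le> k} = pair_sets k"
  proof (intro equalityI subsetI)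
    fix S assume S: "S \<in> pair_sets k"
    then obtain i j where "S = {i, j}" "i < j"
      by (auto simp: pair_sets_def card_2_iff neq_iff insert_commute)
    then show "S \<in> (\<lambda>(i, j). {i, j}) ` {(i, j). 1 \<le> i \<and> i < j \<and> j \<le> k}"
      using S by (force simp: pair_sets_def)
  qed (auto simp: pair_sets_def)
qed

lemma ball_pair_sets_iff:
  "(\<forall>S\<in>pair_sets k. P S) \<longleftrightarrow> (\<forall>i j. 1 \<le> i \<and> i < j \<and> j \<le> k \<longrightarrow> P {i, j})"
proof -
  have "pair_sets k = (\<lambda>(i, j). {i, j}) ` {(i, j). 1 \<le> i \<and> i < j \<and> j \<le> k}"
    using bij_betw_imp_surj_on[OF bij_betw_pair_sets] by simp
  then show ?thesis
    by fastforce
qed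

lemma prod_pois_pairs:
  "(\<Prod>(i, j)\<in>{(i, j). 1 \<le> i \<and> i < j \<and> j \<le> k}. pois c (n i j))
     = (c\<^sup>2) ^ sum (pair_value n) (pair_sets k) / (\<Prod>S\<in>pair_sets k. fact (pair_value n S))
       * exp (- (real (card (pair_sets k)) * c\<^sup>2))"
proof -
  have "(\<Prod>(i, j)\<in>{(i, j). 1 \<le> i \<and> i < j \<and> j \<le> k}. pois c (n i j))
      = (\<Prod>x\<in>{(i, j). 1 \<le> i \<and> i < j \<and> j \<le> k}. pois c (pair_value n ((\<lambda>(i, j). {i, j}) x)))"
    by (intro prod.cong refl) (auto simp: pair_value_doubleton)
  also have "\<dots> = (\<Prod>S\<in>pair_sets k. pois c (pair_value n S))"
    by (rule prod.reindex_bij_betw[OF bij_betw_pair_sets])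
  also have "\<dots> = (\<Prod>S\<in>pair_sets k. (c\<^sup>2) ^ pair_value n S) * (\<Prod>S\<in>pair_sets k. exp (- (c\<^sup>2)))
      / (\<Prod>S\<in>pair_sets k. fact (pair_value n S))"
    by (simp add: pois_def prod.distrib prod_dividef power_mult)
  finally show ?thesis
    by (simp add: power_sum exp_of_nat_mult[symmetric])
qed

lemma transpose_sets_inter:
  fixes k :: nat
  assumes "f \<in> PiE D (\<lambda>_. {S\<in>Pow {1..k}. card S \<le> 2})" "1 \<le> i" "i < j" "j \<le> k"
  shows "transpose_sets {1..k} D f i \<inter> transpose_sets {1..k} D f j = {e\<in>D. f e = {i, j}}"
proof -
  have "f e = {i, j}" if "e \<in> D" "i \<in> f e" "j \<in> f e" for e
  proof -
    have "f e \<subseteq> {1..k}" "card (f e) \<le> 2"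
      using assms(1) that(1) by auto
    then have "finite (f e)" "card (f e) \<le> 2"
      using finite_subset by auto
    moreover have "card {i, j} = 2"
      using assms(3) by simp
    ultimately have "{i, j} = f e"
      using that by (intro card_seteq) auto
    then show ?thesis
      by simp
  qed
  then show ?thesis
    using assms by (auto simp: transpose_sets_def)
qed

lemma has_pair_intersections_transpose_sets_iff:
  assumes "f \<in> PiE D (\<lambda>_. {S\<in>Pow {1..k}. card S \<le> 2})"
  shows "has_pair_intersections k n (transpose_sets {1..k} D f)
    \<longleftrightarrow> (\<forall>S\<in>pair_sets k. card {e\<in>D. f e = S} = pair_value n S)"
proof -
  have "card (transpose_sets {1..k} D f i \<inter> transpose_sets {1..k} D f j) = card {e\<in>D. f e = {i, j}}"
    if "1 \<le> i" "i < j" "j \<le> k" for i j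
    using transpose_sets_inter[OF assms that] by simp
  then show ?thesis
    by (auto simp: has_pair_intersections_def ball_pair_sets_iff pair_value_doubleton)
qed

lemma sum_pair_intersections_card_le_2:
  assumes "finite D"
  shows "(\<Sum>f\<in>{f\<in>PiE D (\<lambda>_. {S\<in>Pow {1..k}. card S \<le> 2}). has_pair_intersections k n (transpose_sets {1..k} D f)}.
            \<Prod>e\<in>D. subset_weight p k (f e))
       = multinomial_coeff (card D) (pair_sets k) (pair_value n)
         * (p\<^sup>2 * (1 - p) ^ (k - 2)) ^ sum (pair_value n) (pair_sets k)
         * (\<Sum>S\<in>{S\<in>Pow {1..k}. card S \<le> 1}. subset_weight p k S) ^ (card D - sum (pair_value n) (pair_sets k))"
proof -
  have small: "{S\<in>Pow {1..k}. card S \<le> 2} = pair_sets k \<union> {S\<in>Pow {1..k}. card S \<le> 1}"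
    by (auto simp: pair_sets_def)
  have filter_eq: "{f\<in>PiE D (\<lambda>_. {S\<in>Pow {1..k}. card S \<le> 2}). has_pair_intersections k n (transpose_sets {1..k} D f)}
      = {f\<in>PiE D (\<lambda>_. pair_sets k \<union> {S\<in>Pow {1..k}. card S \<le> 1}).
           \<forall>S\<in>pair_sets k. card {e\<in>D. f e = S} = pair_value n S}"
    unfolding small[symmetric]
    by (rule Collect_cong, rule conj_cong, rule refl, erule has_pair_intersections_transpose_sets_iff)
  have "finite (pair_sets k)" "finite {S\<in>Pow {1..k}. card S \<le> 1}"
    by (auto simp: pair_sets_def)
  moreover have "pair_sets k \<inter> {S\<in>Pow {1..k}. card S \<le> 1} = {}"
    by (auto simp: pair_sets_def)
  moreover have "(\<Prod>S\<in>pair_sets k. subset_weight p k S ^ pair_value n S)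
      = (p\<^sup>2 * (1 - p) ^ (k - 2)) ^ sum (pair_value n) (pair_sets k)"
    by (simp add: pair_sets_def subset_weight_def power_sum)
  ultimately show ?thesis
    unfolding filter_eq using assms by (simp only: sum_PiE_card_fibres)
qed

lemma sum_subset_weight_card_le_1:
  "(\<Sum>S\<in>{S\<in>Pow {1..k}. card S \<le> 1}. subset_weight p k S)
     = 1 - real (card (pair_sets k)) * (p\<^sup>2 * (1 - p) ^ (k - 2))
         - (\<Sum>S\<in>{S\<in>Pow {1..k}. 2 < card S}. subset_weight p k S)"
proof -
  define L where "L = {S\<in>Pow {1..k}. card S \<le> 1}"
  define G where "G = {S\<in>Pow {1..k}. 2 < card S}"
  have "Pow {1..k} = (L \<union> pair_sets k) \<union> G"
    by (auto simp: L_def G_def pair_sets_def)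
  then have "(\<Sum>S\<in>Pow {1..k}. subset_weight p k S)
      = (\<Sum>S\<in>L \<union> pair_sets k. subset_weight p k S) + (\<Sum>S\<in>G. subset_weight p k S)"
    by (simp only:) (rule sum.union_disjoint, auto simp: L_def G_def pair_sets_def)
  also have "(\<Sum>S\<in>L \<union> pair_sets k. subset_weight p k S)
      = (\<Sum>S\<in>L. subset_weight p k S) + (\<Sum>S\<in>pair_sets k. subset_weight p k S)"
    by (rule sum.union_disjoint) (auto simp: L_def pair_sets_def)
  also have "(\<Sum>S\<in>pair_sets k. subset_weight p k S) = real (card (pair_sets k)) * (p\<^sup>2 * (1 - p) ^ (k - 2))"
    by (simp add: pair_sets_def subset_weight_def)
  finally show ?thesis
    using sum_subset_weight_Pow[of "{1..k}" p] by (simp add: L_def G_def)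
qed

lemma sum_pair_intersections_eq_transpose:
  fixes k :: nat
  assumes "finite D"
  shows "(\<Sum>A\<in>{A\<in>PiE {1..k} (\<lambda>_. Pow D). has_pair_intersections k n A}.
            \<Prod>i\<in>{1..k}. subset_weight p (card D) (A i))
       = (\<Sum>f\<in>PiE D (\<lambda>_. Pow {1..k}). (\<Prod>e\<in>D. subset_weight p k (f e))
            * (if has_pair_intersections k n (transpose_sets {1..k} D f) then 1 else 0))"
proof -
  have "(\<Sum>A\<in>{A\<in>PiE {1..k} (\<lambda>_. Pow D). has_pair_intersections k n A}.
            \<Prod>i\<in>{1..k}. subset_weight p (card D) (A i))
      = (\<Sum>A\<in>PiE {1..k} (\<lambda>_. Pow D). (\<Prod>i\<in>{1..k}. subset_weight p (card D) (A i))
            * (if has_pair_intersections k n A then 1 else 0))"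
    using assms by (simp add: sum.inter_filter finite_PiE if_distrib cong: if_cong)
  also have "\<dots> = (\<Sum>f\<in>PiE D (\<lambda>_. Pow {1..k}). (\<Prod>e\<in>D. subset_weight p k (f e))
            * (if has_pair_intersections k n (transpose_sets {1..k} D f) then 1 else 0))"
    unfolding sum_prod_subset_weight_transpose_sets[OF finite_atLeastAtMost assms] by simp
  finally show ?thesis .
qed

lemma sum_pair_intersections_bounds:
  fixes p :: real and k :: nat and n :: "nat \<Rightarrow> nat \<Rightarrow> nat"
  assumes "finite D" "0 \<le> p" "p \<le> 1"
  defines "main \<equiv> (\<Sum>f\<in>{f\<in>PiE D (\<lambda>_. {S\<in>Pow {1..k}. card S \<le> 2}).
      has_pair_intersections k n (transpose_sets {1..k} D f)}. \<Prod>e\<in>D. subset_weight p k (f e))"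
    and "whole \<equiv> (\<Sum>A\<in>{A\<in>PiE {1..k} (\<lambda>_. Pow D). has_pair_intersections k n A}.
      \<Prod>i\<in>{1..k}. subset_weight p (card D) (A i))"
  shows "main \<le> whole" and "whole \<le> main + card D * (2 ^ k * p ^ 3)"
proof -
  define I where "I = {1..k}"
  define Small where "Small = {S\<in>Pow I. card S \<le> 2}"
  define W where "W f = (\<Prod>e\<in>D. subset_weight p k (f e))
    * (if has_pair_intersections k n (transpose_sets I D f) then 1 else 0)" for f
  define rest where "rest = (\<Sum>f\<in>PiE D (\<lambda>_. Pow I) - PiE D (\<lambda>_. Small). W f)"
  have W_le: "0 \<le> W f" "W f \<le> (\<Prod>e\<in>D. subset_weight p k (f e))" for f
    using assms by (auto simp: W_def subset_weight_nonneg prod_nonneg)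
  have sub: "PiE D (\<lambda>_. Small) \<subseteq> PiE D (\<lambda>_. Pow I)"
    by (auto simp: Small_def PiE_def Pi_def)
  have fin: "finite (PiE D (\<lambda>_. Pow I))"
    using assms(1) by (simp add: I_def finite_PiE)
  have "whole = (\<Sum>f\<in>PiE D (\<lambda>_. Pow I). W f)"
    unfolding whole_def sum_pair_intersections_eq_transpose[OF assms(1)] W_def I_def ..
  also have "\<dots> = (\<Sum>f\<in>PiE D (\<lambda>_. Small). W f) + rest"
    using sum.subset_diff[OF sub fin, of W] unfolding rest_def by linarith
  also have "(\<Sum>f\<in>PiE D (\<lambda>_. Small). W f) = main"
    unfolding main_def W_def I_def Small_def using assms(1)
    by (simp add: sum.inter_filter finite_PiE if_distrib cong: if_cong)
  finally have whole: "whole = main + rest" .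
  have "rest \<le> (\<Sum>f\<in>PiE D (\<lambda>_. Pow I) - PiE D (\<lambda>_. Small). \<Prod>e\<in>D. subset_weight p k (f e))"
    unfolding rest_def by (intro sum_mono W_le)
  also have "\<dots> \<le> card D * (\<Sum>S\<in>Pow I - Small. subset_weight p k S)"
    using assms sum_subset_weight_Pow[of I p]
    by (intro sum_prod_PiE_Diff_le) (auto simp: I_def Small_def subset_weight_nonneg)
  also have "Pow I - Small = {S\<in>Pow I. 2 < card S}"
    by (auto simp: Small_def)
  also have "(\<Sum>S\<in>{S\<in>Pow I. 2 < card S}. subset_weight p k S) \<le> 2 ^ k * p ^ 3"
    using sum_subset_weight_card_gt_le[of I p 2] assms by (simp add: I_def)
  finally have "rest \<le> card D * (2 ^ k * p ^ 3)"
    by (simp add: mult_left_mono)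
  moreover have "0 \<le> rest"
    unfolding rest_def by (intro sum_nonneg W_le)
  ultimately show "main \<le> whole" and "whole \<le> main + card D * (2 ^ k * p ^ 3)"
    using whole by simp_all
qed

lemma tendsto_sum_subset_weight_card_gt_2:
  assumes "c > 0"
  shows "(\<lambda>N. real N * (\<Sum>S\<in>{S\<in>Pow {1..k}. 2 < card S}. subset_weight (c / sqrt (real N)) k S)) \<longlonglongrightarrow> 0"
proof (rule tendsto_sandwich[OF _ _ tendsto_const])
  show "(\<lambda>N. real N * (2 ^ k * (c / sqrt (real N)) ^ 3)) \<longlonglongrightarrow> 0"
    using assms by real_asymp
  show "\<forall>\<^sub>F N in sequentially. 0 \<le> real N * (\<Sum>S\<in>{S\<in>Pow {1..k}. 2 < card S}. subset_weight (c / sqrt (real N)) k S)"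
    using eventually_div_sqrt_le_1[OF less_imp_le[OF assms]]
    by eventually_elim (auto simp: subset_weight_nonneg intro!: mult_nonneg_nonneg sum_nonneg)
  show "\<forall>\<^sub>F N in sequentially. real N * (\<Sum>S\<in>{S\<in>Pow {1..k}. 2 < card S}. subset_weight (c / sqrt (real N)) k S)
      \<le> real N * (2 ^ k * (c / sqrt (real N)) ^ 3)"
    using eventually_div_sqrt_le_1[OF less_imp_le[OF assms]]
    by eventually_elim (use sum_subset_weight_card_gt_le[of "{1..k}" _ 2] in \<open>auto intro!: mult_left_mono\<close>)
qed

lemma tendsto_sum_pair_intersections_card_le_2:
  fixes c :: real and k :: nat and n :: "nat \<Rightarrow> nat \<Rightarrow> nat"
  assumes "c > 0"
  shows "(\<lambda>N. \<Sum>f\<in>{f\<in>PiE {1..N} (\<lambda>_. {S\<in>Pow {1..k}. card S \<le> 2}).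
              has_pair_intersections k n (transpose_sets {1..k} {1..N} f)}.
            \<Prod>e\<in>{1..N}. subset_weight (c / sqrt (real N)) k (f e))
    \<longlonglongrightarrow> (\<Prod>(i, j)\<in>{(i, j). 1 \<le> i \<and> i < j \<and> j \<le> k}. pois c (n i j))"
proof -
  define p where "p N = c / sqrt (real N)" for N
  define a where "a N = p N ^ 2 * (1 - p N) ^ (k - 2)" for N
  define b where "b N = (\<Sum>S\<in>{S\<in>Pow {1..k}. card S \<le> 1}. subset_weight (p N) k S)" for N
  define tail where "tail N = (\<Sum>S\<in>{S\<in>Pow {1..k}. 2 < card S}. subset_weight (p N) k S)" for N
  have Na: "(\<lambda>N. real N * a N) \<longlonglongrightarrow> c\<^sup>2"
  proof -
    have "(\<lambda>N. c\<^sup>2 * (1 - p N) ^ (k - 2)) \<longlonglongrightarrow> c\<^sup>2 * (1 - 0) ^ (k - 2)"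
      unfolding p_def by (intro tendsto_intros) real_asymp
    moreover have "\<forall>\<^sub>F N in sequentially. c\<^sup>2 * (1 - p N) ^ (k - 2) = real N * a N"
      using eventually_gt_at_top[of 0] by eventually_elim (simp add: a_def p_def power_divide)
    ultimately show ?thesis
      by (simp add: Lim_transform_eventually)
  qed
  have Nb: "(\<lambda>N. real N * (1 - b N)) \<longlonglongrightarrow> real (card (pair_sets k)) * c\<^sup>2"
  proof -
    have "(\<lambda>N. real (card (pair_sets k)) * (real N * a N) + real N * tail N)
        \<longlonglongrightarrow> real (card (pair_sets k)) * c\<^sup>2 + 0"
      unfolding tail_def p_def by (intro tendsto_intros Na tendsto_sum_subset_weight_card_gt_2 assms)
    moreover have "real (card (pair_sets k)) * (real N * a N) + real N * tail N = real N * (1 - b N)" for N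
      unfolding b_def sum_subset_weight_card_le_1 by (simp add: a_def tail_def algebra_simps)
    ultimately show ?thesis
      by simp
  qed
  have "(\<lambda>N. multinomial_coeff N (pair_sets k) (pair_value n) * a N ^ sum (pair_value n) (pair_sets k)
      * b N ^ (N - sum (pair_value n) (pair_sets k)))
    \<longlonglongrightarrow> (c\<^sup>2) ^ sum (pair_value n) (pair_sets k) / (\<Prod>S\<in>pair_sets k. fact (pair_value n S))
      * exp (- (real (card (pair_sets k)) * c\<^sup>2))"
    by (rule tendsto_multinomial_Poisson[OF Na Nb])
  then show ?thesis
    unfolding sum_pair_intersections_card_le_2[OF finite_atLeastAtMost] prod_pois_pairs
    by (simp add: a_def b_def p_def)
qed

lemma tendsto_sum_pair_intersections:
  fixes c :: real and k :: nat and n :: "nat \<Rightarrow> nat \<Rightarrow> nat"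
  assumes "c > 0"
  shows "(\<lambda>N. \<Sum>A\<in>{A\<in>PiE {1..k} (\<lambda>_. Pow {1..N}). has_pair_intersections k n A}.
            \<Prod>i\<in>{1..k}. sigma_sq c N (A i))
    \<longlonglongrightarrow> (\<Prod>(i, j)\<in>{(i, j). 1 \<le> i \<and> i < j \<and> j \<le> k}. pois c (n i j))"
proof -
  define whole where "whole N = (\<Sum>A\<in>{A\<in>PiE {1..k} (\<lambda>_. Pow {1..N}). has_pair_intersections k n A}.
      \<Prod>i\<in>{1..k}. sigma_sq c N (A i))" for N
  define main where "main N = (\<Sum>f\<in>{f\<in>PiE {1..N} (\<lambda>_. {S\<in>Pow {1..k}. card S \<le> 2}).
      has_pair_intersections k n (transpose_sets {1..k} {1..N} f)}.
      \<Prod>e\<in>{1..N}. subset_weight (c / sqrt (real N)) k (f e))" for N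
  have "(\<lambda>N. whole N - main N) \<longlonglongrightarrow> 0"
  proof (rule tendsto_sandwich[OF _ _ tendsto_const])
    show "(\<lambda>N. real N * (2 ^ k * (c / sqrt (real N)) ^ 3)) \<longlonglongrightarrow> 0"
      using assms by real_asymp
    show "\<forall>\<^sub>F N in sequentially. 0 \<le> whole N - main N"
      using eventually_div_sqrt_le_1[OF less_imp_le[OF assms]]
    proof eventually_elim
      case (elim N)
      then show ?case
        using sum_pair_intersections_bounds(1)[of "{1..N}" "c / sqrt (real N)" k n]
        by (simp add: whole_def main_def sigma_sq_eq_subset_weight)
    qed
    show "\<forall>\<^sub>F N in sequentially. whole N - main N \<le> real N * (2 ^ k * (c / sqrt (real N)) ^ 3)"
      using eventually_div_sqrt_le_1[OF less_imp_le[OF assms]]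
    proof eventually_elim
      case (elim N)
      then show ?case
        using sum_pair_intersections_bounds(2)[of "{1..N}" "c / sqrt (real N)" k n]
        by (simp add: whole_def main_def sigma_sq_eq_subset_weight)
    qed
  qed
  from tendsto_add[OF tendsto_sum_pair_intersections_card_le_2[OF assms, of k n] this]
  show ?thesis
    by (simp add: whole_def main_def)
qed

theorem mainTheorem2:
  fixes d :: nat and c :: real
  assumes "d \<ge> 2" and "c > 0"
  shows
   "(\<forall>N::nat. real N > c ^ 2 \<longrightarrow> (\<Sum>A\<in>Pow {1..N}. sigma_sq c N A) = 1)
    \<and> (\<lambda>N::nat. \<Sum>(A1, A2, A3) \<in> {(A1, A2, A3). A1 \<subseteq> {1..N} \<and> A2 \<subseteq> {1..N} \<and> A3 \<subseteq> {1..N}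
              \<and> A1 \<inter> A2 \<inter> A3 \<noteq> {}}.
          sigma_sq c N A1 * sigma_sq c N A2 * sigma_sq c N A3) \<longlonglongrightarrow> 0
    \<and> (\<forall>(k::nat) (n::nat \<Rightarrow> nat \<Rightarrow> nat).
         (\<lambda>N::nat. \<Sum>A \<in> {A \<in> PiE {1..k} (\<lambda>_. Pow {1..N}).
                    \<forall>i j. 1 \<le> i \<and> i < j \<and> j \<le> k \<longrightarrow> card (A i \<inter> A j) = n i j}.
             \<Prod>i\<in>{1..k}. sigma_sq c N (A i))
         \<longlonglongrightarrow> (\<Prod>(i, j) \<in> {(i, j). 1 \<le> i \<and> i < j \<and> j \<le> k}. pois c (n i j)))
    \<and> (\<forall>n::nat. n \<ge> 1 \<longrightarrow>
         (\<lambda>N::nat. \<Sum>A \<in> PiE {1..n} (\<lambda>_. Pow {1..N}).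
             (\<Prod>i\<in>{1..n}. sigma_sq c N (A i))
             * inverse (real d ^ (2 * card (A 1 - (\<Union>i\<in>{2..n}. A i)))))
         \<longlonglongrightarrow> 0)
    \<and> (\<lambda>k. pois c k * inverse (real d ^ (2 * k))) sums exp (- (1 - 1 / real d ^ 2) * c ^ 2)"
proof (intro conjI allI impI)
  \<comment> \<open>(1) holds for every \<open>N\<close>: the binomial theorem does not need \<open>c / sqrt N \<le> 1\<close>.\<close>
  show "(\<Sum>A\<in>Pow {1..N}. sigma_sq c N A) = 1" for N
    using sum_subset_weight_Pow[of "{1..N}" "c / sqrt (real N)"] by (simp add: sigma_sq_eq_subset_weight)
qed (rule tendsto_sum_triple_intersecting[OF assms(2)]
      tendsto_sum_pair_intersections[OF assms(2), unfolded has_pair_intersections_def]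
      tendsto_sum_exclusive_part[OF assms] sums_pois_inverse_power | assumption)+

end
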